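(* Let $g$ be the Lorentzian form on $\mathbb{R}^4$ with matrix $\mathrm{diag}(1,1,1,-c^2)$. For a timelike vector $u$ let $R_u$ be the equivalence relation on $\mathbb{R}^4$ defined by $x\,R_u\,y\iff g(x-y,u)=0$. If $u_1,u_2$ are non-proportional future timelike vectors, then the smallest equivalence relation containing $R_{u_1}\cup R_{u_2}$ is the total relation $\mathbb{R}^4\times\mathbb{R}^4$.
   Context: A vector $u$ is timelike if $g(u,u)<0$, and future timelike if moreover its fourth component is positive. *)

theory Defs
  imports "HOL-Analysis.Analysis"
begin

definition lorentz :: "real \<Rightarrow> real^4 \<Rightarrow> real^4 \<Rightarrow> real" where
  "lorentz c x y = x$1 * y$1 + x$2 * y$2 + x$3 * y$3 - c^2 * (x$4 * y$4)"

definition timelike :: "real \<Rightarrow> real^4 \<Rightarrow> bool" where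
  "timelike c u \<longleftrightarrow> lorentz c u u < 0"

definition future_timelike :: "real \<Rightarrow> real^4 \<Rightarrow> bool" where
  "future_timelike c u \<longleftrightarrow> timelike c u \<and> u$4 > 0"

definition Rrel :: "real \<Rightarrow> real^4 \<Rightarrow> ((real^4) \<times> (real^4)) set" where
  "Rrel c u = {p :: (real^4) \<times> (real^4). lorentz c (fst p - snd p) u = 0}"

definition equiv_closure :: "('a \<times> 'a) set \<Rightarrow> ('a \<times> 'a) set" where
  "equiv_closure r = \<Inter> {s. equiv UNIV s \<and> r \<subseteq> s}"

definition proportional :: "real^4 \<Rightarrow> real^4 \<Rightarrow> bool" where
  "proportional u v \<longleftrightarrow> (\<exists>a::real. u = a *\<^sub>R v) \<or> (\<exists>a::real. v = a *\<^sub>R u)"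

end

theory Submission
  imports Defs
begin

text \<open>
  Write \<open>g(x, u) = x \<bullet> J u\<close> with \<open>J = diag(1,1,1,-c\<^sup>2)\<close>. If \<open>u\<^sub>1, u\<^sub>2\<close> are not
  proportional, neither are \<open>J u\<^sub>1, J u\<^sub>2\<close>, so the linear map \<open>z \<mapsto> (g(z,u\<^sub>1), g(z,u\<^sub>2))\<close>
  is onto \<open>\<real>\<^sup>2\<close>. Hence for all \<open>x, y\<close> some \<open>z\<close> satisfies \<open>x R\<^sub>u\<^sub>1 z\<close> and \<open>z R\<^sub>u\<^sub>2 y\<close>, and
  every equivalence relation containing both relations relates \<open>x\<close> to \<open>y\<close>.
\<close>

lemma equiv_closure_eq_UNIV_if_relcomp:
  assumes "r O s = UNIV"
  shows "equiv_closure (r \<union> s) = UNIV"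
proof -
  have "t = UNIV" if "equiv UNIV t" "r \<union> s \<subseteq> t" for t
  proof -
    have "r O s \<subseteq> t O t" using that(2) by blast
    also have "\<dots> \<subseteq> t" using that(1) by (auto simp: equiv_def dest: transD)
    finally show ?thesis using assms by blast
  qed
  then show ?thesis by (auto simp: equiv_closure_def)
qed

lemma inner_pair_surjective:
  fixes a b :: "'a::real_inner"
  assumes "a \<noteq> 0" and "\<And>t. b \<noteq> t *\<^sub>R a"
  shows "\<exists>z. z \<bullet> a = \<alpha> \<and> z \<bullet> b = \<beta>"
proof -
  \<comment> \<open>\<open>b'\<close> is the Gram--Schmidt component of \<open>b\<close> orthogonal to \<open>a\<close>.\<close>
  define b' where "b' = b - ((b \<bullet> a) / (a \<bullet> a)) *\<^sub>R a"
  have aa: "a \<bullet> a \<noteq> 0" using assms(1) by simp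
  have b'a: "b' \<bullet> a = 0" using aa by (simp add: b'_def inner_diff_left)
  have "b' \<noteq> 0" using assms(2) by (auto simp: b'_def)
  moreover have "b' \<bullet> b = b' \<bullet> b'"
    using b'a by (simp add: b'_def inner_diff_right inner_commute)
  ultimately have b'b: "b' \<bullet> b \<noteq> 0" by simp
  define w where "w = (\<alpha> / (a \<bullet> a)) *\<^sub>R a"
  define z where "z = w + ((\<beta> - w \<bullet> b) / (b' \<bullet> b)) *\<^sub>R b'"
  have "z \<bullet> a = \<alpha>" using aa b'a by (simp add: z_def w_def inner_add_left)
  moreover have "z \<bullet> b = \<beta>" using b'b by (simp add: z_def inner_add_left)
  ultimately show ?thesis by blast
qed

definition lorentz_dual :: "real \<Rightarrow> real^4 \<Rightarrow> real^4" where
  "lorentz_dual c u = (\<chi> i. if i = 4 then - (c\<^sup>2 * u$4) else u$i)"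

lemma lorentz_eq_inner_dual: "lorentz c x u = x \<bullet> lorentz_dual c u"
  by (simp add: lorentz_def lorentz_dual_def inner_vec_def sum_4)

lemma lorentz_dual_eq_scaleR_iff:
  assumes "c \<noteq> 0"
  shows "lorentz_dual c v = t *\<^sub>R lorentz_dual c u \<longleftrightarrow> v = t *\<^sub>R u"
  using assms by (auto simp: lorentz_dual_def vec_eq_iff forall_4)

lemma lorentz_pair_surjective:
  assumes "c \<noteq> 0" and "\<not> proportional u1 u2"
  shows "\<exists>z. lorentz c z u1 = \<alpha> \<and> lorentz c z u2 = \<beta>"
proof -
  have "u1 \<noteq> 0" and "\<And>t. u2 \<noteq> t *\<^sub>R u1"
    using assms(2) by (auto simp: proportional_def)
  then have "lorentz_dual c u1 \<noteq> 0" and "\<And>t. lorentz_dual c u2 \<noteq> t *\<^sub>R lorentz_dual c u1"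
    using lorentz_dual_eq_scaleR_iff[OF assms(1), of _ 0] lorentz_dual_eq_scaleR_iff[OF assms(1)]
    by auto
  then show ?thesis
    unfolding lorentz_eq_inner_dual by (rule inner_pair_surjective)
qed

lemma Rrel_relcomp_eq_UNIV:
  assumes "c \<noteq> 0" and "\<not> proportional u1 u2"
  shows "Rrel c u1 O Rrel c u2 = UNIV"
proof -
  have "(x, y) \<in> Rrel c u1 O Rrel c u2" for x y
  proof -
    obtain z where "lorentz c z u1 = lorentz c x u1" "lorentz c z u2 = lorentz c y u2"
      using lorentz_pair_surjective[OF assms] by blast
    then have "(x, z) \<in> Rrel c u1" and "(z, y) \<in> Rrel c u2"
      by (simp_all add: Rrel_def lorentz_eq_inner_dual inner_diff_left)
    then show ?thesis by blast
  qed
  then show ?thesis by auto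
qed

theorem proposition3p10:
  fixes c :: real and u1 u2 :: "real^4"
  assumes "c > 0"
    and "future_timelike c u1" and "future_timelike c u2"
    and "\<not> proportional u1 u2"
  shows "equiv_closure (Rrel c u1 \<union> Rrel c u2) = UNIV"
  using assms(1,4) by (intro equiv_closure_eq_UNIV_if_relcomp Rrel_relcomp_eq_UNIV) auto

end
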